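(* Let $R$ be a field, $S$ an idempotent semifield, and $v:R\to S$ a B\'ezout valuation such that the restriction $v^\circ:R^\circ\to S^\circ$ is surjective. Then there is a one-to-one correspondence between ideals $I\subseteq R^\circ$ and $k$-ideals $J\subseteq S^\circ$, given by $J=v(I)$ and $I=v^{-1}(J)$ (i.e. $I=\{a\in R^\circ: v(a)\in J\}$). This correspondence preserves prime ideals.
   Context: An idempotent semiring is a commutative semiring with $a+a=a$; it is ordered by $a\le b$ iff $a+b=b$. A semifield is a semiring whose nonzero elements are multiplicatively invertible. A (non-Archimedean) seminorm $v:R\to S$ satisfies $v(0)=0$, $v(1)=1$, $v(-1)=1$, $v(ab)\le v(a)v(b)$, $v(a+b)\le v(a)+v(b)$; it is a valuation if it is multiplicative ($v(ab)=v(a)v(b)$) and $v(a)\ne0$ for $a\neq0$. $R^\circ=\{a\in R:v(a)\le1\}$ and $S^\circ=\{x\in S:x\le1\}$; $v^\circ$ is the restriction of $v$. For $R$ a field and $S$ a semifield, a multiplicative seminorm $v$ is B\'ezout if for all $a,b\in R$ there exist $x,y\in R^\circ$ with $v(xa+yb)=v(a)+v(b)$. An ideal of a semiring $S'$ is a subset containing $0$, closed under addition and under multiplication by elements of $S'$; it is a $k$-ideal if $a+b\in I$ and $a\in I$ imply $b\in I$; it is prime if its complement is multiplicatively closed. *)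

theory Defs
  imports Main
begin

definition sle :: "'s::comm_semiring_1 \<Rightarrow> 's \<Rightarrow> bool" where
  "sle a b \<longleftrightarrow> a + b = b"

definition idem_semifield :: "'s::comm_semiring_1 itself \<Rightarrow> bool" where
  "idem_semifield _ \<longleftrightarrow>
     (0::'s) \<noteq> 1 \<and> (\<forall>a::'s. a + a = a) \<and> (\<forall>a::'s. a \<noteq> 0 \<longrightarrow> (\<exists>b. a * b = 1))"

definition seminorm :: "('r::comm_ring_1 \<Rightarrow> 's::comm_semiring_1) \<Rightarrow> bool" where
  "seminorm v \<longleftrightarrow> v 0 = 0 \<and> v 1 = 1 \<and> v (-1) = 1 \<and>
     (\<forall>a b. sle (v (a * b)) (v a * v b)) \<and> (\<forall>a b. sle (v (a + b)) (v a + v b))"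

definition valuation :: "('r::comm_ring_1 \<Rightarrow> 's::comm_semiring_1) \<Rightarrow> bool" where
  "valuation v \<longleftrightarrow> seminorm v \<and> (\<forall>a b. v (a * b) = v a * v b) \<and> (\<forall>a. a \<noteq> 0 \<longrightarrow> v a \<noteq> 0)"

definition Rcirc :: "('r::comm_ring_1 \<Rightarrow> 's::comm_semiring_1) \<Rightarrow> 'r set" where
  "Rcirc v = {a. sle (v a) 1}"

definition Scirc :: "'s::comm_semiring_1 set" where
  "Scirc = {x. sle x 1}"

definition bezout :: "('r::comm_ring_1 \<Rightarrow> 's::comm_semiring_1) \<Rightarrow> bool" where
  "bezout v \<longleftrightarrow> (\<forall>a b. \<exists>x y. x \<in> Rcirc v \<and> y \<in> Rcirc v \<and> v (x * a + y * b) = v a + v b)"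

definition ideal_in :: "'a::comm_semiring_1 set \<Rightarrow> 'a set \<Rightarrow> bool" where
  "ideal_in A I \<longleftrightarrow> I \<subseteq> A \<and> 0 \<in> I \<and> (\<forall>a\<in>I. \<forall>b\<in>I. a + b \<in> I) \<and>
     (\<forall>r\<in>A. \<forall>a\<in>I. r * a \<in> I)"

definition k_ideal_in :: "'a::comm_semiring_1 set \<Rightarrow> 'a set \<Rightarrow> bool" where
  "k_ideal_in A J \<longleftrightarrow> ideal_in A J \<and> (\<forall>a\<in>A. \<forall>b\<in>A. a + b \<in> J \<and> a \<in> J \<longrightarrow> b \<in> J)"

definition prime_in :: "'a::comm_semiring_1 set \<Rightarrow> 'a set \<Rightarrow> bool" where
  "prime_in A I \<longleftrightarrow> ideal_in A I \<and> 1 \<notin> I \<and>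
     (\<forall>a\<in>A. \<forall>b\<in>A. a \<notin> I \<and> b \<notin> I \<longrightarrow> a * b \<notin> I)"

end

theory Submission
  imports Defs
begin

text \<open>An ideal I of R\<degree> is determined by the values it takes: if v b \<le> v g with 0 \<noteq> g \<in> I,
  then b = (b/g) g with v (b/g) \<le> 1, so b \<in> I. Hence I is the full preimage of v(I), and v(I) is
  downward closed, which in the idempotent semiring S\<degree> (where b \<le> a + b) is the k-property;
  the Bezout property makes v(I) closed under addition. Conversely a k-ideal J is downward closed,
  so its preimage is an ideal because v(a + b) \<le> v a + v b and v(r a) \<le> v r v a. Multiplicativity
  of v then transports primality along the bijection.\<close>

lemma sle_refl: "(\<And>x::'s. x + x = x) \<Longrightarrow> sle (a::'s::comm_semiring_1) a"
  unfolding sle_def by blast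

lemma sle_trans: "sle a b \<Longrightarrow> sle b c \<Longrightarrow> sle (a::'s::comm_semiring_1) c"
  unfolding sle_def by (metis add.assoc)

lemma sle_mult_right: "sle a b \<Longrightarrow> sle (a * c) (b * (c::'s::comm_semiring_1))"
  unfolding sle_def by (metis distrib_right)

lemma sle_add_lub: "sle a c \<Longrightarrow> sle b c \<Longrightarrow> sle (a + b) (c::'s::comm_semiring_1)"
  unfolding sle_def by (metis add.assoc)

lemma sle_add_right: "(\<And>x::'s. x + x = x) \<Longrightarrow> sle b (a + (b::'s::comm_semiring_1))"
  unfolding sle_def by (metis add.assoc add.commute)

lemma sle_zero_iff: "sle a 0 \<longleftrightarrow> (a::'s::comm_semiring_1) = 0"
  unfolding sle_def by simp

lemma seminormD:
  assumes "seminorm v"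
  shows "v 0 = 0" "v 1 = 1" "sle (v (a * b)) (v a * v b)" "sle (v (a + b)) (v a + v b)"
  using assms unfolding seminorm_def by blast+

lemma valuationD:
  assumes "valuation v"
  shows "seminorm v" "v (a * b) = v a * v b" "a \<noteq> 0 \<Longrightarrow> v a \<noteq> 0"
  using assms unfolding valuation_def by blast+

lemma Rcirc_iff_Scirc: "a \<in> Rcirc v \<longleftrightarrow> v a \<in> Scirc"
  unfolding Rcirc_def Scirc_def by simp

lemma one_in_Rcirc:
  fixes v :: "'r::comm_ring_1 \<Rightarrow> 's::comm_semiring_1"
  assumes "seminorm v" "\<And>x::'s. x + x = x"
  shows "1 \<in> Rcirc v"
  unfolding Rcirc_def using assms by (simp add: seminormD sle_refl)

lemma Rcirc_add:
  assumes "seminorm v" "a \<in> Rcirc v" "b \<in> Rcirc v"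
  shows "a + b \<in> Rcirc v"
proof -
  have "sle (v a + v b) 1"
    using assms(2,3) unfolding Rcirc_def by (simp add: sle_add_lub)
  then show ?thesis
    using seminormD(4)[OF assms(1)] unfolding Rcirc_def by (blast intro: sle_trans)
qed

lemma Rcirc_mult:
  assumes "seminorm v" "a \<in> Rcirc v" "b \<in> Rcirc v"
  shows "a * b \<in> Rcirc v"
proof -
  have "sle (v a * v b) (v b)"
    using assms(2) sle_mult_right[of "v a" 1 "v b"] unfolding Rcirc_def by simp
  then show ?thesis
    using assms(3) seminormD(3)[OF assms(1)] unfolding Rcirc_def by (blast intro: sle_trans)
qed

lemma ideal_in_subset: "ideal_in A I \<Longrightarrow> I \<subseteq> A"
  unfolding ideal_in_def by blast

lemma k_ideal_in_ideal_in: "k_ideal_in A J \<Longrightarrow> ideal_in A J"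
  unfolding k_ideal_in_def by blast

lemma image_restrict_vimage: "J \<subseteq> f ` A \<Longrightarrow> f ` {a \<in> A. f a \<in> J} = J"
  by (auto simp: image_iff)

lemma k_ideal_in_down_closed:
  assumes "k_ideal_in A J" "x \<in> A" "y \<in> J" "sle x y"
  shows "x \<in> J"
proof -
  have "y + x \<in> J" "y \<in> A"
    using assms ideal_in_subset unfolding k_ideal_in_def sle_def by (auto simp: add.commute)
  then show ?thesis
    using assms unfolding k_ideal_in_def by blast
qed

lemma ideal_in_Rcirc_down_closed:
  fixes v :: "'r::field \<Rightarrow> 's::comm_semiring_1"
  assumes val: "valuation v" and I: "ideal_in (Rcirc v) I"
    and "g \<in> I" and le: "sle (v b) (v g)"
  shows "b \<in> I"
proof (cases "g = 0")
  case True
  then have "b = 0"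
    using le val by (metis seminormD(1) sle_zero_iff valuationD(1,3))
  then show ?thesis
    using I unfolding ideal_in_def by simp
next
  case False
  have "v g * v (inverse g) = 1"
    using False val by (metis right_inverse seminormD(2) valuationD(1,2))
  then have "sle (v (b * inverse g)) 1"
    using sle_mult_right[OF le, of "v (inverse g)"] val by (simp add: valuationD(2))
  then have "b * inverse g * g \<in> I"
    using I \<open>g \<in> I\<close> unfolding ideal_in_def Rcirc_def by blast
  then show ?thesis
    using False by (simp add: field_simps)
qed

lemma ideal_in_Rcirc_saturated:
  fixes v :: "'r::field \<Rightarrow> 's::comm_semiring_1"
  assumes "valuation v" "ideal_in (Rcirc v) I" "\<And>x::'s. x + x = x"
  shows "{a \<in> Rcirc v. v a \<in> v ` I} = I"
proof
  show "I \<subseteq> {a \<in> Rcirc v. v a \<in> v ` I}"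
    using ideal_in_subset[OF assms(2)] by blast
  show "{a \<in> Rcirc v. v a \<in> v ` I} \<subseteq> I"
  proof
    fix a
    assume "a \<in> {a \<in> Rcirc v. v a \<in> v ` I}"
    then obtain g where "g \<in> I" "v a = v g"
      by auto
    then show "a \<in> I"
      using ideal_in_Rcirc_down_closed[OF assms(1,2)] sle_refl[OF assms(3)] by metis
  qed
qed

lemma k_ideal_in_image:
  fixes v :: "'r::field \<Rightarrow> 's::comm_semiring_1"
  assumes val: "valuation v" and "bezout v" and surj: "v ` Rcirc v = Scirc"
    and idem: "\<And>x::'s. x + x = x" and I: "ideal_in (Rcirc v) I"
  shows "k_ideal_in Scirc (v ` I)"
proof -
  have add: "v \<alpha> + v \<beta> \<in> v ` I" if "\<alpha> \<in> I" "\<beta> \<in> I" for \<alpha> \<beta>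
  proof -
    obtain x y where "x \<in> Rcirc v" "y \<in> Rcirc v" "v (x * \<alpha> + y * \<beta>) = v \<alpha> + v \<beta>"
      using \<open>bezout v\<close> unfolding bezout_def by blast
    moreover have "x * \<alpha> + y * \<beta> \<in> I"
      using I that calculation unfolding ideal_in_def by blast
    ultimately show ?thesis
      by (metis image_eqI)
  qed
  have scale: "r * v \<alpha> \<in> v ` I" if r: "r \<in> Scirc" and "\<alpha> \<in> I" for r \<alpha>
  proof -
    obtain c where "c \<in> Rcirc v" "r = v c"
      using r unfolding surj[symmetric] by blast
    then show ?thesis
      using I \<open>\<alpha> \<in> I\<close> val unfolding ideal_in_def by (metis image_eqI valuationD(2))
  qed
  have k: "b \<in> v ` I" if b: "b \<in> Scirc" and ab: "a + b \<in> v ` I" for a b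
  proof -
    obtain \<beta> where \<beta>: "\<beta> \<in> Rcirc v" "b = v \<beta>"
      using b unfolding surj[symmetric] by blast
    obtain \<gamma> where "\<gamma> \<in> I" "a + b = v \<gamma>"
      using ab by blast
    then have "sle (v \<beta>) (v \<gamma>)"
      using sle_add_right[OF idem, of b a] \<beta> by simp
    then have "\<beta> \<in> I"
      by (rule ideal_in_Rcirc_down_closed[OF val I \<open>\<gamma> \<in> I\<close>])
    then show ?thesis
      using \<beta> by blast
  qed
  have "v ` I \<subseteq> Scirc"
    using I ideal_in_subset Rcirc_iff_Scirc by blast
  moreover have "0 \<in> v ` I"
    using I val unfolding ideal_in_def by (metis image_eqI seminormD(1) valuationD(1))
  moreover have "\<forall>a\<in>v ` I. \<forall>b\<in>v ` I. a + b \<in> v ` I"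
    using add by blast
  moreover have "\<forall>r\<in>Scirc. \<forall>a\<in>v ` I. r * a \<in> v ` I"
    using scale by blast
  moreover have "\<forall>a\<in>Scirc. \<forall>b\<in>Scirc. a + b \<in> v ` I \<and> a \<in> v ` I \<longrightarrow> b \<in> v ` I"
    using k by blast
  ultimately show ?thesis
    unfolding k_ideal_in_def ideal_in_def by blast
qed

lemma ideal_in_vimage:
  assumes sn: "seminorm v" and J: "k_ideal_in Scirc J"
  shows "ideal_in (Rcirc v) {a \<in> Rcirc v. v a \<in> J}"
proof -
  have J_ideal: "ideal_in Scirc J"
    using J by (rule k_ideal_in_ideal_in)
  have add: "a + b \<in> Rcirc v \<and> v (a + b) \<in> J"
    if a: "a \<in> Rcirc v" "v a \<in> J" and b: "b \<in> Rcirc v" "v b \<in> J" for a b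
  proof -
    have "a + b \<in> Rcirc v"
      using sn a(1) b(1) by (rule Rcirc_add)
    moreover have "v a + v b \<in> J"
      using J_ideal a(2) b(2) unfolding ideal_in_def by blast
    ultimately show ?thesis
      using k_ideal_in_down_closed[OF J _ _ seminormD(4)[OF sn]] Rcirc_iff_Scirc by blast
  qed
  have scale: "r * a \<in> Rcirc v \<and> v (r * a) \<in> J"
    if r: "r \<in> Rcirc v" and a: "a \<in> Rcirc v" "v a \<in> J" for r a
  proof -
    have "r * a \<in> Rcirc v"
      using sn r a(1) by (rule Rcirc_mult)
    moreover have "v r * v a \<in> J"
      using J_ideal r a(2) Rcirc_iff_Scirc unfolding ideal_in_def by blast
    ultimately show ?thesis
      using k_ideal_in_down_closed[OF J _ _ seminormD(3)[OF sn]] Rcirc_iff_Scirc by blast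
  qed
  have "0 \<in> Rcirc v" "v 0 \<in> J"
    using J_ideal seminormD(1)[OF sn] unfolding Rcirc_def ideal_in_def sle_def by simp_all
  then show ?thesis
    unfolding ideal_in_def using add scale by blast
qed

lemma prime_in_image_iff:
  fixes f :: "'a::comm_semiring_1 \<Rightarrow> 'b::comm_semiring_1"
  assumes surj: "f ` A = B" and "1 \<in> A" "f 1 = 1"
    and mult_closed: "\<And>x y. x \<in> A \<Longrightarrow> y \<in> A \<Longrightarrow> x * y \<in> A"
    and mult: "\<And>x y. f (x * y) = f x * f y"
    and "ideal_in A I" "ideal_in B (f ` I)"
    and saturated: "{a \<in> A. f a \<in> f ` I} = I"
  shows "prime_in A I \<longleftrightarrow> prime_in B (f ` I)"
proof -
  have mem_iff: "f a \<in> f ` I \<longleftrightarrow> a \<in> I" if "a \<in> A" for a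
    using saturated that by blast
  have one: "1 \<in> I \<longleftrightarrow> 1 \<in> f ` I"
    using mem_iff[OF \<open>1 \<in> A\<close>] \<open>f 1 = 1\<close> by simp
  have mult_iff: "(\<forall>a\<in>A. \<forall>b\<in>A. a \<notin> I \<and> b \<notin> I \<longrightarrow> a * b \<notin> I) \<longleftrightarrow>
      (\<forall>x\<in>B. \<forall>y\<in>B. x \<notin> f ` I \<and> y \<notin> f ` I \<longrightarrow> x * y \<notin> f ` I)"
    unfolding surj[symmetric] using mem_iff mult_closed by (simp flip: mult)
  show ?thesis
    unfolding prime_in_def using one mult_iff \<open>ideal_in A I\<close> \<open>ideal_in B (f ` I)\<close> by blast
qed

lemma prime_in_Rcirc_iff_image:
  fixes v :: "'r::field \<Rightarrow> 's::comm_semiring_1"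
  assumes val: "valuation v" and "bezout v" and surj: "v ` Rcirc v = Scirc"
    and idem: "\<And>x::'s. x + x = x" and I: "ideal_in (Rcirc v) I"
  shows "prime_in (Rcirc v) I \<longleftrightarrow> prime_in Scirc (v ` I)"
proof -
  have sn: "seminorm v"
    using val by (rule valuationD(1))
  have "ideal_in Scirc (v ` I)"
    using k_ideal_in_image[OF assms] by (rule k_ideal_in_ideal_in)
  then show ?thesis
    using surj one_in_Rcirc[OF sn idem] seminormD(2)[OF sn] Rcirc_mult[OF sn]
      valuationD(2)[OF val] I ideal_in_Rcirc_saturated[OF val I idem]
    by (intro prime_in_image_iff)
qed

theorem theorem2p12:
  fixes v :: "'r::field \<Rightarrow> 's::comm_semiring_1"
  assumes "idem_semifield TYPE('s)"
    and "valuation v"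
    and "bezout v"
    and "v ` Rcirc v = Scirc"
  shows "(\<forall>I. ideal_in (Rcirc v) I \<longrightarrow>
            k_ideal_in Scirc (v ` I) \<and> {a \<in> Rcirc v. v a \<in> v ` I} = I)
       \<and> (\<forall>J. k_ideal_in Scirc J \<longrightarrow>
            ideal_in (Rcirc v) {a \<in> Rcirc v. v a \<in> J} \<and> v ` {a \<in> Rcirc v. v a \<in> J} = J)
       \<and> (\<forall>I. ideal_in (Rcirc v) I \<longrightarrow> (prime_in (Rcirc v) I \<longleftrightarrow> prime_in Scirc (v ` I)))
       \<and> (\<forall>J. k_ideal_in Scirc J \<longrightarrow>
            (prime_in Scirc J \<longleftrightarrow> prime_in (Rcirc v) {a \<in> Rcirc v. v a \<in> J}))"
proof -
  have idem: "\<And>x::'s. x + x = x"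
    using assms(1) unfolding idem_semifield_def by blast
  have sn: "seminorm v"
    using assms(2) by (rule valuationD(1))
  have image_vimage: "v ` {a \<in> Rcirc v. v a \<in> J} = J" if "k_ideal_in Scirc J" for J
    using ideal_in_subset[OF k_ideal_in_ideal_in[OF that]] unfolding assms(4)[symmetric]
    by (rule image_restrict_vimage)
  show ?thesis
  proof (intro conjI allI impI)
    fix I
    assume I: "ideal_in (Rcirc v) I"
    show "k_ideal_in Scirc (v ` I)"
      using assms(2-4) idem I by (rule k_ideal_in_image)
    show "{a \<in> Rcirc v. v a \<in> v ` I} = I"
      using assms(2) I idem by (rule ideal_in_Rcirc_saturated)
  next
    fix J :: "'s set"
    assume J: "k_ideal_in Scirc J"
    show "ideal_in (Rcirc v) {a \<in> Rcirc v. v a \<in> J}"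
      using sn J by (rule ideal_in_vimage)
    show "v ` {a \<in> Rcirc v. v a \<in> J} = J"
      using J by (rule image_vimage)
  next
    fix I
    assume "ideal_in (Rcirc v) I"
    with assms(2-4) idem show "prime_in (Rcirc v) I \<longleftrightarrow> prime_in Scirc (v ` I)"
      by (rule prime_in_Rcirc_iff_image)
  next
    fix J :: "'s set"
    assume J: "k_ideal_in Scirc J"
    show "prime_in Scirc J \<longleftrightarrow> prime_in (Rcirc v) {a \<in> Rcirc v. v a \<in> J}"
      using prime_in_Rcirc_iff_image[OF assms(2-4) idem ideal_in_vimage[OF sn J]]
      unfolding image_vimage[OF J] by (rule sym)
  qed
qed

end
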